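(* Let $(A,\cdot,\circ)$ be a skew brace and $B$, $C$ sub-skew braces with $A = B\cdot C$ and $A = B\circ C$. If both $B$ and $C$ are trivial skew braces, then $A*A = (B*C)\cdot(C*B)$.
   Context: A skew brace is a set $A$ with two group operations $\cdot$ (often written by juxtaposition) and $\circ$ such that $a\circ(bc) = (a\circ b)\,a^{-1}\,(a\circ c)$ for all $a,b,c\in A$. $a^{-1}$ denotes the inverse in $(A,\cdot)$. Define $a*b = a^{-1}(a\circ b)b^{-1}$; for subsets $X,Y$, $X*Y$ is the subgroup of $(A,\cdot)$ generated by all $x*y$ ($x\in X,y\in Y$). A sub-skew brace is a subset that is a subgroup of both groups; it is trivial if $a\circ b=ab$ for all its elements. $A=B\cdot C$ (resp. $A=B\circ C$) means every element is $bc$ (resp. $b\circ c$) with $b\in B$, $c\in C$. *)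

theory Defs
  imports "HOL-Algebra.Algebra"
begin

definition skew_brace :: "'a monoid \<Rightarrow> 'a monoid \<Rightarrow> bool" where
  "skew_brace G H \<longleftrightarrow> group G \<and> group H \<and> carrier H = carrier G \<and>
     (\<forall>a\<in>carrier G. \<forall>b\<in>carrier G. \<forall>c\<in>carrier G.
        a \<otimes>\<^bsub>H\<^esub> (b \<otimes>\<^bsub>G\<^esub> c)
          = (a \<otimes>\<^bsub>H\<^esub> b) \<otimes>\<^bsub>G\<^esub> inv\<^bsub>G\<^esub> a \<otimes>\<^bsub>G\<^esub> (a \<otimes>\<^bsub>H\<^esub> c))"

definition brace_star :: "'a monoid \<Rightarrow> 'a monoid \<Rightarrow> 'a \<Rightarrow> 'a \<Rightarrow> 'a" where
  "brace_star G H a b = inv\<^bsub>G\<^esub> a \<otimes>\<^bsub>G\<^esub> (a \<otimes>\<^bsub>H\<^esub> b) \<otimes>\<^bsub>G\<^esub> inv\<^bsub>G\<^esub> b"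

definition brace_star_set :: "'a monoid \<Rightarrow> 'a monoid \<Rightarrow> 'a set \<Rightarrow> 'a set \<Rightarrow> 'a set" where
  "brace_star_set G H S T = generate G {brace_star G H s t | s t. s \<in> S \<and> t \<in> T}"

definition sub_skew_brace :: "'a monoid \<Rightarrow> 'a monoid \<Rightarrow> 'a set \<Rightarrow> bool" where
  "sub_skew_brace G H B \<longleftrightarrow> subgroup B G \<and> subgroup B H"

definition trivial_sub_skew_brace :: "'a monoid \<Rightarrow> 'a monoid \<Rightarrow> 'a set \<Rightarrow> bool" where
  "trivial_sub_skew_brace G H B \<longleftrightarrow> (\<forall>a\<in>B. \<forall>b\<in>B. a \<otimes>\<^bsub>H\<^esub> b = a \<otimes>\<^bsub>G\<^esub> b)"

end

(* The map lambda a x = a\<inverse>(a \<circ> x) turns (A,\<circ>) into a group acting on (A,\<cdot>) by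
   automorphisms, and a * x = lambda a x \<cdot> x\<inverse>, so a * (x y) = (a * x) \<cdot> x (a * y) x\<inverse>.
   Triviality of B and C means lambda b fixes B pointwise and lambda c fixes C pointwise.
   Writing a = b\<^sub>2 \<circ> c\<^sub>2 = c \<circ> b and x = c' b' = b\<^sub>3 c\<^sub>3, lambda a agrees with
   lambda b\<^sub>2 on C and with lambda c on B, which yields a * x = (b\<^sub>2 * c')(c * b\<^sub>3).
   Conjugation by elements of B and of C maps generators of B * C into B * C, so B * C is normal;
   hence (B * C)(C * B) is a subgroup containing every generator of A * A. *)

theory Submission
  imports Defs
begin

lemma (in group) conj_generate_closed:
  assumes S: "S \<subseteq> carrier G" and g: "g \<in> carrier G"
    and conj_S: "\<And>s. s \<in> S \<Longrightarrow> g \<otimes> s \<otimes> inv g \<in> generate G S"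
    and h: "h \<in> generate G S"
  shows "g \<otimes> h \<otimes> inv g \<in> generate G S"
proof -
  interpret conj: group_hom G G "\<lambda>x. g \<otimes> x \<otimes> inv g"
    by unfold_locales (auto intro!: homI simp: g m_assoc inv_solve_left)
  have "(\<lambda>x. g \<otimes> x \<otimes> inv g) ` generate G S = generate G ((\<lambda>x. g \<otimes> x \<otimes> inv g) ` S)"
    using conj.generate_img[OF S] by simp
  also have "\<dots> \<subseteq> generate G S"
    by (rule generate_subgroup_incl) (use conj_S generate_is_subgroup[OF S] in auto)
  finally show ?thesis
    using h by blast
qed

lemma (in group) inv_mult_cancel_left:
  "x \<in> carrier G \<Longrightarrow> y \<in> carrier G \<Longrightarrow> inv x \<otimes> (x \<otimes> y) = y"
  by (simp add: m_assoc[symmetric])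

lemma (in group) set_mult_carrier_commute:
  assumes "subgroup B G" "subgroup C G" "carrier G = B <#> C"
  shows "carrier G = C <#> B"
proof
  show "carrier G \<subseteq> C <#> B"
  proof
    fix x assume x: "x \<in> carrier G"
    then obtain b c where bc: "b \<in> B" "c \<in> C" "inv x = b \<otimes> c"
      using assms(3) unfolding set_mult_def by (metis (no_types, lifting) UN_E inv_closed singletonD)
    then have "x = inv c \<otimes> inv b"
      using x assms(1,2) by (metis inv_inv inv_mult_group subgroup.mem_carrier)
    then show "x \<in> C <#> B"
      using bc assms(1,2) unfolding set_mult_def by (blast intro: subgroup.m_inv_closed)
  qed
qed (use assms setmult_subset_G subgroup.subset in blast)

definition brace_lambda :: "'a monoid \<Rightarrow> 'a monoid \<Rightarrow> 'a \<Rightarrow> 'a \<Rightarrow> 'a" where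
  "brace_lambda G H a x = inv\<^bsub>G\<^esub> a \<otimes>\<^bsub>G\<^esub> (a \<otimes>\<^bsub>H\<^esub> x)"

context
  fixes G (structure) and H :: "'a monoid"
  assumes brace: "skew_brace G H"
begin

interpretation G: group G
  using brace unfolding skew_brace_def by blast

interpretation H: group H
  using brace unfolding skew_brace_def by blast

lemma carrier_circ: "carrier H = carrier G"
  using brace unfolding skew_brace_def by blast

lemma circ_closed: "a \<in> carrier G \<Longrightarrow> b \<in> carrier G \<Longrightarrow> a \<otimes>\<^bsub>H\<^esub> b \<in> carrier G"
  using H.m_closed carrier_circ by auto

lemma brace_compat:
  "a \<in> carrier G \<Longrightarrow> b \<in> carrier G \<Longrightarrow> c \<in> carrier G \<Longrightarrow>
     a \<otimes>\<^bsub>H\<^esub> (b \<otimes> c) = (a \<otimes>\<^bsub>H\<^esub> b) \<otimes> inv a \<otimes> (a \<otimes>\<^bsub>H\<^esub> c)"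
  using brace unfolding skew_brace_def by blast

abbreviation lambda :: "'a \<Rightarrow> 'a \<Rightarrow> 'a" where "lambda \<equiv> brace_lambda G H"
abbreviation star :: "'a \<Rightarrow> 'a \<Rightarrow> 'a" where "star \<equiv> brace_star G H"

lemma lambda_closed: "a \<in> carrier G \<Longrightarrow> x \<in> carrier G \<Longrightarrow> lambda a x \<in> carrier G"
  unfolding brace_lambda_def by (simp add: circ_closed)

lemma circ_eq_mult_lambda: "a \<in> carrier G \<Longrightarrow> x \<in> carrier G \<Longrightarrow> a \<otimes>\<^bsub>H\<^esub> x = a \<otimes> lambda a x"
  unfolding brace_lambda_def by (simp add: circ_closed G.m_assoc[symmetric])

lemma lambda_mult:
  "a \<in> carrier G \<Longrightarrow> x \<in> carrier G \<Longrightarrow> y \<in> carrier G \<Longrightarrow>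
     lambda a (x \<otimes> y) = lambda a x \<otimes> lambda a y"
  unfolding brace_lambda_def by (simp add: brace_compat circ_closed G.m_assoc)

lemma lambda_circ:
  assumes "a \<in> carrier G" "b \<in> carrier G" "x \<in> carrier G"
  shows "lambda (a \<otimes>\<^bsub>H\<^esub> b) x = lambda a (lambda b x)"
proof -
  have "(a \<otimes>\<^bsub>H\<^esub> b) \<otimes>\<^bsub>H\<^esub> x = a \<otimes>\<^bsub>H\<^esub> (b \<otimes> lambda b x)"
    using assms by (simp add: H.m_assoc carrier_circ circ_eq_mult_lambda[of b x])
  also have "\<dots> = (a \<otimes>\<^bsub>H\<^esub> b) \<otimes> (lambda a (lambda b x))"
    using assms by (simp add: brace_compat brace_lambda_def lambda_closed circ_closed G.m_assoc)
  finally show ?thesis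
    using assms by (simp add: brace_lambda_def circ_closed lambda_closed G.m_assoc[symmetric])
qed

lemma brace_star_eq: "a \<in> carrier G \<Longrightarrow> x \<in> carrier G \<Longrightarrow> star a x = lambda a x \<otimes> inv x"
  unfolding brace_star_def brace_lambda_def by (simp add: circ_closed G.m_assoc)

lemma brace_star_closed: "a \<in> carrier G \<Longrightarrow> x \<in> carrier G \<Longrightarrow> star a x \<in> carrier G"
  by (simp add: brace_star_eq lambda_closed)

lemma brace_star_mult_right:
  assumes "a \<in> carrier G" "x \<in> carrier G" "y \<in> carrier G"
  shows "star a (x \<otimes> y) = star a x \<otimes> (x \<otimes> star a y \<otimes> inv x)"
  using assms
  by (simp add: brace_star_eq lambda_mult lambda_closed G.m_assoc G.inv_mult_group G.inv_mult_cancel_left)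

lemma brace_star_circ_left:
  assumes "a \<in> carrier G" "b \<in> carrier G" "x \<in> carrier G" "lambda b x = x"
  shows "star (a \<otimes>\<^bsub>H\<^esub> b) x = star a x"
  using assms by (simp add: brace_star_eq lambda_circ circ_closed)

lemma lambda_trivial:
  assumes "trivial_sub_skew_brace G H B" "B \<subseteq> carrier G" "b \<in> B" "b' \<in> B"
  shows "lambda b b' = b'"
proof -
  have "b \<in> carrier G" "b' \<in> carrier G"
    using assms(2-4) by auto
  then show ?thesis
    using assms unfolding trivial_sub_skew_brace_def brace_lambda_def
    by (simp add: G.inv_mult_cancel_left)
qed

lemma brace_star_trivial:
  assumes "trivial_sub_skew_brace G H B" "B \<subseteq> carrier G" "b \<in> B" "b' \<in> B"
  shows "star b b' = \<one>"
proof -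
  have "b \<in> carrier G" "b' \<in> carrier G"
    using assms(2-4) by auto
  then show ?thesis
    using assms by (simp add: brace_star_eq lambda_trivial)
qed

lemma brace_star_in_brace_star_set:
  "s \<in> S \<Longrightarrow> t \<in> T \<Longrightarrow> star s t \<in> brace_star_set G H S T"
  unfolding brace_star_set_def by (blast intro: generate.incl)

lemma brace_star_set_subgroup:
  assumes "S \<subseteq> carrier G" "T \<subseteq> carrier G"
  shows "subgroup (brace_star_set G H S T) G"
  unfolding brace_star_set_def
  by (rule G.generate_is_subgroup) (use assms brace_star_closed in blast)

lemma brace_star_set_mono:
  "S \<subseteq> S' \<Longrightarrow> T \<subseteq> T' \<Longrightarrow> brace_star_set G H S T \<subseteq> brace_star_set G H S' T'"
  unfolding brace_star_set_def by (rule G.mono_generate) blast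

lemma brace_star_conj_trivial_left:
  assumes B: "subgroup B G" "trivial_sub_skew_brace G H B" and C: "subgroup C G"
    and CB: "carrier G = C <#> B"
    and b: "b \<in> B" "b1 \<in> B" and c: "c \<in> C"
  obtains c' where "c' \<in> C" "b1 \<otimes> star b c \<otimes> inv b1 = star b c'"
proof -
  have BG: "B \<subseteq> carrier G" and CG: "C \<subseteq> carrier G"
    using B(1) C subgroup.subset by auto
  have in_G: "b \<in> carrier G" "b1 \<in> carrier G" "c \<in> carrier G"
    using b c BG CG by auto
  then have "b1 \<otimes> c \<in> C <#> B"
    using CB by (metis G.m_closed)
  then obtain c' b2 where cb: "c' \<in> C" "b2 \<in> B" "b1 \<otimes> c = c' \<otimes> b2"
    unfolding set_mult_def by blast
  have cb_G: "c' \<in> carrier G" "b2 \<in> carrier G"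
    using cb BG CG by auto
  have "b1 \<otimes> star b c \<otimes> inv b1 = star b (b1 \<otimes> c)"
    using b in_G
    by (simp add: brace_star_mult_right brace_star_trivial[OF B(2) BG] brace_star_closed)
  also have "\<dots> = star b c'"
    using b cb in_G cb_G
    by (simp add: brace_star_mult_right brace_star_trivial[OF B(2) BG] brace_star_closed)
  finally show ?thesis
    using cb(1) that by blast
qed

lemma brace_star_set_normal:
  assumes B: "subgroup B G" "trivial_sub_skew_brace G H B" and C: "subgroup C G"
    and BC: "carrier G = B <#> C"
  shows "brace_star_set G H B C \<lhd> G"
proof -
  define S where "S = {star b c | b c. b \<in> B \<and> c \<in> C}"
  have BG: "B \<subseteq> carrier G" and CG: "C \<subseteq> carrier G"
    using B(1) C subgroup.subset by auto
  have S: "S \<subseteq> carrier G"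
    unfolding S_def using BG CG brace_star_closed by blast
  have CB: "carrier G = C <#> B"
    using G.set_mult_carrier_commute[OF B(1) C BC] .
  have conj_B: "b1 \<otimes> s \<otimes> inv b1 \<in> generate G S" if b1: "b1 \<in> B" and "s \<in> S" for b1 s
  proof -
    obtain b c where bc: "b \<in> B" "c \<in> C" "s = star b c"
      using \<open>s \<in> S\<close> unfolding S_def by blast
    obtain c' where "c' \<in> C" "b1 \<otimes> s \<otimes> inv b1 = star b c'"
      using brace_star_conj_trivial_left[OF B C CB bc(1) b1 bc(2)] bc(3) by blast
    then show ?thesis
      unfolding S_def using bc(1) by (blast intro: generate.incl)
  qed
  have conj_C: "c1 \<otimes> s \<otimes> inv c1 \<in> generate G S" if "c1 \<in> C" "s \<in> S" for c1 s
  proof -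
    obtain b c where bc: "b \<in> B" "c \<in> C" "s = star b c"
      using \<open>s \<in> S\<close> unfolding S_def by blast
    have "b \<in> carrier G" "c \<in> carrier G" "c1 \<in> carrier G"
      using bc that BG CG by auto
    then have "c1 \<otimes> s \<otimes> inv c1 = inv (star b c1) \<otimes> star b (c1 \<otimes> c)"
      by (simp add: bc(3) brace_star_mult_right brace_star_closed G.inv_mult_cancel_left)
    moreover have "star b c1 \<in> S" "star b (c1 \<otimes> c) \<in> S"
      unfolding S_def using bc that subgroup.m_closed[OF C] by blast+
    ultimately show ?thesis
      by (simp add: generate.incl generate.inv generate.eng)
  qed
  show ?thesis
    unfolding brace_star_set_def S_def[symmetric]
  proof (rule G.normal_invI[OF G.generate_is_subgroup[OF S]])
    fix g h assume g: "g \<in> carrier G" and h: "h \<in> generate G S"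
    obtain b1 c1 where bc1: "b1 \<in> B" "c1 \<in> C" "g = b1 \<otimes> c1"
      using g BC unfolding set_mult_def by blast
    have "c1 \<otimes> h \<otimes> inv c1 \<in> generate G S"
      using G.conj_generate_closed[OF S _ conj_C h] bc1 CG by blast
    then have "b1 \<otimes> (c1 \<otimes> h \<otimes> inv c1) \<otimes> inv b1 \<in> generate G S"
      using G.conj_generate_closed[OF S _ conj_B] bc1 BG by blast
    moreover have "b1 \<in> carrier G" "c1 \<in> carrier G" "h \<in> carrier G"
      using bc1 BG CG h G.generate_in_carrier[OF S] by auto
    ultimately show "g \<otimes> h \<otimes> inv g \<in> generate G S"
      by (simp add: bc1(3) G.m_assoc G.inv_mult_group)
  qed
qed

lemma brace_star_mem_set_mult:
  assumes B: "sub_skew_brace G H B" "trivial_sub_skew_brace G H B"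
    and C: "sub_skew_brace G H C" "trivial_sub_skew_brace G H C"
    and BC: "carrier G = B <#> C" and BC_circ: "carrier G = B <#>\<^bsub>H\<^esub> C"
    and a: "a \<in> carrier G" and x: "x \<in> carrier G"
  shows "star a x \<in> brace_star_set G H B C <#> brace_star_set G H C B"
proof -
  have sub: "subgroup B G" "subgroup C G" "subgroup B H" "subgroup C H"
    using B(1) C(1) unfolding sub_skew_brace_def by auto
  have BG: "B \<subseteq> carrier G" and CG: "C \<subseteq> carrier G"
    using sub subgroup.subset by auto
  have CB: "carrier G = C <#> B"
    using G.set_mult_carrier_commute[OF sub(1,2) BC] .
  have CB_circ: "carrier G = C <#>\<^bsub>H\<^esub> B"
    using H.set_mult_carrier_commute[OF sub(3,4)] BC_circ carrier_circ by simp
  obtain b2 c2 where bc2: "b2 \<in> B" "c2 \<in> C" "a = b2 \<otimes>\<^bsub>H\<^esub> c2"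
    using a BC_circ unfolding set_mult_def by blast
  obtain c b where cb: "c \<in> C" "b \<in> B" "a = c \<otimes>\<^bsub>H\<^esub> b"
    using a CB_circ unfolding set_mult_def by blast
  obtain c' b' where cb': "c' \<in> C" "b' \<in> B" "x = c' \<otimes> b'"
    using x CB unfolding set_mult_def by blast
  obtain b3 c3 where bc3: "b3 \<in> B" "c3 \<in> C" "c' \<otimes> b' = b3 \<otimes> c3"
    using x cb'(3) BC unfolding set_mult_def by blast
  have in_G: "b2 \<in> carrier G" "c2 \<in> carrier G" "c \<in> carrier G" "b \<in> carrier G"
      "c' \<in> carrier G" "b' \<in> carrier G" "b3 \<in> carrier G" "c3 \<in> carrier G"
    using bc2 cb cb' bc3 BG CG by auto
  have "star a c' = star b2 c'"
    unfolding bc2(3) using bc2 cb' in_G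
    by (simp add: brace_star_circ_left lambda_trivial[OF C(2) CG])
  moreover have "star a b' = star c b'"
    unfolding cb(3) using cb cb' in_G
    by (simp add: brace_star_circ_left lambda_trivial[OF B(2) BG])
  ultimately have "star a x = star b2 c' \<otimes> (c' \<otimes> star c b' \<otimes> inv c')"
    using a cb'(3) in_G by (simp add: brace_star_mult_right)
  also have "c' \<otimes> star c b' \<otimes> inv c' = star c (c' \<otimes> b')"
    using cb cb' in_G
    by (simp add: brace_star_mult_right brace_star_trivial[OF C(2) CG] brace_star_closed)
  also note bc3(3)
  also have "star c (b3 \<otimes> c3) = star c b3"
    using cb bc3 in_G
    by (simp add: brace_star_mult_right brace_star_trivial[OF C(2) CG] brace_star_closed)
  finally show ?thesis
    using bc2 cb' cb bc3 brace_star_in_brace_star_set unfolding set_mult_def by blast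
qed

end

theorem proposition3p3:
  fixes G H :: "'a monoid" and B C :: "'a set"
  assumes "skew_brace G H"
    and "sub_skew_brace G H B" and "sub_skew_brace G H C"
    and "carrier G = B <#>\<^bsub>G\<^esub> C"
    and "carrier G = B <#>\<^bsub>H\<^esub> C"
    and "trivial_sub_skew_brace G H B" and "trivial_sub_skew_brace G H C"
  shows "brace_star_set G H (carrier G) (carrier G)
           = brace_star_set G H B C <#>\<^bsub>G\<^esub> brace_star_set G H C B"
proof -
  interpret G: group G
    using assms(1) unfolding skew_brace_def by blast
  let ?A = "brace_star_set G H (carrier G) (carrier G)"
  let ?P = "brace_star_set G H B C" and ?Q = "brace_star_set G H C B"
  have sub: "subgroup B G" "subgroup C G"
    using assms(2,3) unfolding sub_skew_brace_def by auto
  then have BG: "B \<subseteq> carrier G" and CG: "C \<subseteq> carrier G"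
    using subgroup.subset by auto
  have "subgroup (?P <#>\<^bsub>G\<^esub> ?Q) G"
    using brace_star_set_normal[OF assms(1) sub(1) assms(6) sub(2) assms(4)]
      brace_star_set_subgroup[OF assms(1) CG BG] by (rule G.mult_norm_subgroup)
  then have "?A \<subseteq> ?P <#>\<^bsub>G\<^esub> ?Q"
    unfolding brace_star_set_def[of G H "carrier G"]
    by (rule G.generate_subgroup_incl[rotated])
      (use brace_star_mem_set_mult[OF assms(1) assms(2,6) assms(3,7) assms(4,5)] in blast)
  moreover have "?P <#>\<^bsub>G\<^esub> ?Q \<subseteq> ?A <#>\<^bsub>G\<^esub> ?A"
    using BG CG by (intro mono_set_mult brace_star_set_mono[OF assms(1)])
  then have "?P <#>\<^bsub>G\<^esub> ?Q \<subseteq> ?A"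
    using G.subgroup_mult_id[OF brace_star_set_subgroup[OF assms(1)]] by blast
  ultimately show ?thesis
    by blast
qed

end
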